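(* Let $P\in\{0,1\}^{k\times\ell}$ be a pattern with a row $r\in[k]$ and a column $c\in[\ell]$ such that $\mathrm{supp}(P)\subseteq(\{r\}\times[\ell])\cup([k]\times[c,\ell])$. Then every 1-entry of $P$ in $\{r\}\times[c]$ is row-bounding.
   Context: All matrices are binary; rows numbered top to bottom, columns left to right; $(i,j)$ is the entry in row $i$, column $j$; $\mathrm{supp}$ is the set of 1-entries; $[a,b]=\{a,\dots,b\}$, $[n]=[1,n]$. $M\Delta f$ is $M$ with the value of entry $f$ switched. An embedding of $P\in\{0,1\}^{k\times\ell}$ into $M\in\{0,1\}^{m\times n}$ is a map $\phi:[k]\times[\ell]\to[m]\times[n]$ sending 1-entries to 1-entries and such that if $e_1=(i_1,j_1)$, $e_2=(i_2,j_2)$ map to $(i_1^*,j_1^* )$, $(i_2^*,j_2^* )$, then $i_1<i_2\Rightarrow i_1^*<i_2^*$ and $j_1<j_2\Rightarrow j_1^*<j_2^*$. $M$ avoids $P$ if no embedding exists; $\mathrm{Av}(P)$ is the set of $P$-avoiding matrices. For a 1-entry $e$ of $P$ and $M\in\mathrm{Av}(P)$, a 0-entry $f$ of $M$ is critical for $e$ if some embedding of $P$ into $M\Delta f$ maps $e$ to $f$; a horizontal 0-run (maximal run of consecutive 0-entries in a row) is critical for $e$ if it contains a 0-entry critical for $e$. The 1-entry $e$ is row-bounding if there is a constant $K$ such that for every $M\in\mathrm{Av}(P)$ every row of $M$ contains at most $K$ horizontal 0-runs critical for $e$. *)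

theory Defs
  imports Main
begin

text \<open>A binary matrix of size m x n is represented by a function M :: nat \<times> nat \<Rightarrow> bool
  (True = 1-entry), of which only the entries in {1..m} \<times> {1..n} are relevant.
  Rows and columns are numbered from 1.\<close>

type_synonym bmat = "nat \<times> nat \<Rightarrow> bool"

definition embedding ::
  "nat \<Rightarrow> nat \<Rightarrow> bmat \<Rightarrow> nat \<Rightarrow> nat \<Rightarrow> bmat \<Rightarrow> (nat \<times> nat \<Rightarrow> nat \<times> nat) \<Rightarrow> bool" where
  "embedding k l P m n M \<phi> \<longleftrightarrow>
     (\<forall>e \<in> {1..k} \<times> {1..l}. \<phi> e \<in> {1..m} \<times> {1..n}) \<and>
     (\<forall>e \<in> {1..k} \<times> {1..l}. P e \<longrightarrow> M (\<phi> e)) \<and>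
     (\<forall>e1 \<in> {1..k} \<times> {1..l}. \<forall>e2 \<in> {1..k} \<times> {1..l}.
        (fst e1 < fst e2 \<longrightarrow> fst (\<phi> e1) < fst (\<phi> e2)) \<and>
        (snd e1 < snd e2 \<longrightarrow> snd (\<phi> e1) < snd (\<phi> e2)))"

definition avoids :: "nat \<Rightarrow> nat \<Rightarrow> bmat \<Rightarrow> nat \<Rightarrow> nat \<Rightarrow> bmat \<Rightarrow> bool" where
  "avoids k l P m n M \<longleftrightarrow> \<not> (\<exists>\<phi>. embedding k l P m n M \<phi>)"

definition flip :: "bmat \<Rightarrow> nat \<times> nat \<Rightarrow> bmat" where
  "flip M f = M(f := \<not> M f)"

definition critical_entry ::
  "nat \<Rightarrow> nat \<Rightarrow> bmat \<Rightarrow> nat \<times> nat \<Rightarrow> nat \<Rightarrow> nat \<Rightarrow> bmat \<Rightarrow> nat \<times> nat \<Rightarrow> bool" where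
  "critical_entry k l P e m n M f \<longleftrightarrow>
     f \<in> {1..m} \<times> {1..n} \<and> \<not> M f \<and>
     (\<exists>\<phi>. embedding k l P m n (flip M f) \<phi> \<and> \<phi> e = f)"

definition hrun :: "nat \<Rightarrow> nat \<Rightarrow> bmat \<Rightarrow> nat \<Rightarrow> nat \<Rightarrow> nat \<Rightarrow> bool" where
  "hrun m n M i a b \<longleftrightarrow>
     i \<in> {1..m} \<and> 1 \<le> a \<and> a \<le> b \<and> b \<le> n \<and>
     (\<forall>j \<in> {a..b}. \<not> M (i, j)) \<and>
     (a = 1 \<or> M (i, a - 1)) \<and> (b = n \<or> M (i, b + 1))"

definition critical_runs ::
  "nat \<Rightarrow> nat \<Rightarrow> bmat \<Rightarrow> nat \<times> nat \<Rightarrow> nat \<Rightarrow> nat \<Rightarrow> bmat \<Rightarrow> nat \<Rightarrow> (nat \<times> nat) set" where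
  "critical_runs k l P e m n M i =
     {(a, b). hrun m n M i a b \<and> (\<exists>j \<in> {a..b}. critical_entry k l P e m n M (i, j))}"

definition row_bounding :: "nat \<Rightarrow> nat \<Rightarrow> bmat \<Rightarrow> nat \<times> nat \<Rightarrow> bool" where
  "row_bounding k l P e \<longleftrightarrow>
     (\<exists>K::nat. \<forall>m n M. avoids k l P m n M \<longrightarrow>
        (\<forall>i \<in> {1..m}. card (critical_runs k l P e m n M i) \<le> K))"

end

theory Submission
  imports Defs
begin

text \<open>Let \<open>e = (r, j)\<close> with \<open>j \<le> c\<close>, and suppose row \<open>i\<close> of a \<open>P\<close>-avoiding \<open>M\<close>
  had \<open>j + 1\<close> critical runs for \<open>e\<close>. The 1-entries just before the 2nd, ..., (j+1)-th run
  are separators \<open>s\<^sub>1 < ... < s\<^sub>j\<close> in row \<open>i\<close>, all left of a critical entry \<open>(i, x)\<close>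
  in the last run. Take an embedding of \<open>P\<close> into \<open>M \<Delta> (i, x)\<close> sending \<open>e\<close> to \<open>(i, x)\<close>.
  If the columns of \<open>P\<close> before \<open>j\<close> all land left of \<open>s\<^sub>j\<close>, moving \<open>e\<close> to \<open>(i, s\<^sub>j)\<close>
  embeds \<open>P\<close> into \<open>M\<close>. Otherwise all columns from \<open>j\<close> on land right of \<open>s\<^sub>j\<close>, and since
  the columns before \<open>j\<close> carry 1-entries only in row \<open>r\<close>, column \<open>b < j\<close> can be sent to
  \<open>s\<^sub>b\<close> in row \<open>i\<close>. Either way \<open>M\<close> contains \<open>P\<close>; so every row has at most \<open>j\<close>
  critical runs for \<open>e\<close>.\<close>

lemma embeddingI:
  assumes "\<And>a b. a \<in> {1..k} \<Longrightarrow> b \<in> {1..l} \<Longrightarrow> \<phi> (a, b) \<in> {1..m} \<times> {1..n}"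
    and "\<And>a b. a \<in> {1..k} \<Longrightarrow> b \<in> {1..l} \<Longrightarrow> P (a, b) \<Longrightarrow> M (\<phi> (a, b))"
    and "\<And>a1 b1 a2 b2. a1 \<in> {1..k} \<Longrightarrow> b1 \<in> {1..l} \<Longrightarrow> a2 \<in> {1..k} \<Longrightarrow> b2 \<in> {1..l}
           \<Longrightarrow> a1 < a2 \<Longrightarrow> fst (\<phi> (a1, b1)) < fst (\<phi> (a2, b2))"
    and "\<And>a1 b1 a2 b2. a1 \<in> {1..k} \<Longrightarrow> b1 \<in> {1..l} \<Longrightarrow> a2 \<in> {1..k} \<Longrightarrow> b2 \<in> {1..l}
           \<Longrightarrow> b1 < b2 \<Longrightarrow> snd (\<phi> (a1, b1)) < snd (\<phi> (a2, b2))"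
  shows "embedding k l P m n M \<phi>"
  using assms unfolding embedding_def by (simp add: mem_Times_iff)

context
  fixes k l m n :: nat and P M :: bmat and \<phi> :: "nat \<times> nat \<Rightarrow> nat \<times> nat"
  assumes emb: "embedding k l P m n M \<phi>"
begin

lemma embedding_range:
  "a \<in> {1..k} \<Longrightarrow> b \<in> {1..l} \<Longrightarrow> \<phi> (a, b) \<in> {1..m} \<times> {1..n}"
  using emb unfolding embedding_def by blast

lemma embedding_one:
  "a \<in> {1..k} \<Longrightarrow> b \<in> {1..l} \<Longrightarrow> P (a, b) \<Longrightarrow> M (\<phi> (a, b))"
  using emb unfolding embedding_def by blast

lemma embedding_row_less:
  "a1 \<in> {1..k} \<Longrightarrow> b1 \<in> {1..l} \<Longrightarrow> a2 \<in> {1..k} \<Longrightarrow> b2 \<in> {1..l} \<Longrightarrow> a1 < a2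
    \<Longrightarrow> fst (\<phi> (a1, b1)) < fst (\<phi> (a2, b2))"
  using emb unfolding embedding_def by (metis SigmaI fst_conv)

lemma embedding_col_less:
  "a1 \<in> {1..k} \<Longrightarrow> b1 \<in> {1..l} \<Longrightarrow> a2 \<in> {1..k} \<Longrightarrow> b2 \<in> {1..l} \<Longrightarrow> b1 < b2
    \<Longrightarrow> snd (\<phi> (a1, b1)) < snd (\<phi> (a2, b2))"
  using emb unfolding embedding_def by (metis SigmaI snd_conv)

lemma embedding_inj_on: "inj_on \<phi> ({1..k} \<times> {1..l})"
proof (rule inj_onI)
  fix e1 e2 assume e: "e1 \<in> {1..k} \<times> {1..l}" "e2 \<in> {1..k} \<times> {1..l}" "\<phi> e1 = \<phi> e2"
  then have "\<not> fst e1 < fst e2" "\<not> fst e2 < fst e1" "\<not> snd e1 < snd e2" "\<not> snd e2 < snd e1"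
    using embedding_row_less embedding_col_less by (metis mem_Times_iff prod.collapse less_irrefl)+
  then show "e1 = e2" by (simp add: prod_eq_iff)
qed

end

lemma embedding_flip_one:
  assumes emb: "embedding k l P m n (flip M f) \<phi>" and \<phi>e: "\<phi> e = f"
    and e: "e \<in> {1..k} \<times> {1..l}" and ab: "a \<in> {1..k}" "b \<in> {1..l}" "P (a, b)" "(a, b) \<noteq> e"
  shows "M (\<phi> (a, b))"
proof -
  have "\<phi> (a, b) \<noteq> f"
    using inj_onD[OF embedding_inj_on[OF emb], of "(a, b)" e] \<phi>e e ab by auto
  then show ?thesis using embedding_one[OF emb ab(1-3)] by (simp add: flip_def)
qed

lemma embedding_move_left:
  assumes emb: "embedding k l P m n (flip M (i, x)) \<phi>" and \<phi>e: "\<phi> (r, j) = (i, x)"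
    and r: "r \<in> {1..k}" and j: "j \<in> {1..l}"
    and y: "M (i, y)" "1 \<le> y" "y < x"
    and left: "\<forall>a \<in> {1..k}. \<forall>b \<in> {1..l}. b < j \<longrightarrow> snd (\<phi> (a, b)) < y"
  shows "embedding k l P m n M (\<phi>((r, j) := (i, y)))"
proof (rule embeddingI)
  fix a b assume "a \<in> {1..k}" "b \<in> {1..l}"
  then show "(\<phi>((r, j) := (i, y))) (a, b) \<in> {1..m} \<times> {1..n}"
    using embedding_range[OF emb] embedding_range[OF emb r j] \<phi>e y by auto
next
  fix a b assume "a \<in> {1..k}" "b \<in> {1..l}" "P (a, b)"
  then show "M ((\<phi>((r, j) := (i, y))) (a, b))"
    using embedding_flip_one[OF emb \<phi>e] r j y by auto
next
  fix a1 b1 a2 b2 assume "a1 \<in> {1..k}" "b1 \<in> {1..l}" "a2 \<in> {1..k}" "b2 \<in> {1..l}" "a1 < a2"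
  moreover have row: "fst ((\<phi>((r, j) := (i, y))) e) = fst (\<phi> e)" for e using \<phi>e by simp
  ultimately show "fst ((\<phi>((r, j) := (i, y))) (a1, b1)) < fst ((\<phi>((r, j) := (i, y))) (a2, b2))"
    unfolding row using embedding_row_less[OF emb] by blast
next
  fix a1 b1 a2 b2 assume A: "a1 \<in> {1..k}" "b1 \<in> {1..l}" "a2 \<in> {1..k}" "b2 \<in> {1..l}" "b1 < b2"
  have "snd (\<phi> (r, j)) < snd (\<phi> (a2, b2))" if "b1 = j" "(a2, b2) \<noteq> (r, j)"
    using embedding_col_less[OF emb r j A(3,4)] that A(5) by simp
  then show "snd ((\<phi>((r, j) := (i, y))) (a1, b1)) < snd ((\<phi>((r, j) := (i, y))) (a2, b2))"
    using embedding_col_less[OF emb A] left A \<phi>e y by auto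
qed

lemma embedding_reroute_left:
  assumes supp: "\<forall>a \<in> {1..k}. \<forall>b \<in> {1..l}. P (a, b) \<longrightarrow> a = r \<or> j \<le> b"
    and emb: "embedding k l P m n (flip M (i, x)) \<phi>" and \<phi>e: "\<phi> (r, j) = (i, x)"
    and r: "r \<in> {1..k}" and j: "j \<in> {1..l}"
    and sep: "\<forall>p \<in> {1..j}. M (i, sep p) \<and> sep p \<in> {1..n}" and sep_mono: "strict_mono_on {1..j} sep"
    and wide: "a' \<in> {1..k}" "b' \<in> {1..l}" "b' < j" "sep j \<le> snd (\<phi> (a', b'))"
  shows "\<exists>\<psi>. embedding k l P m n M \<psi>"
proof -
  define \<psi> where "\<psi> = (\<lambda>(a, b).
    if b < j then (if a = r then i else fst (\<phi> (a, b)), sep b)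
    else if (a, b) = (r, j) then (i, sep j) else \<phi> (a, b))"
  have \<psi>_row: "fst (\<psi> (a, b)) = fst (\<phi> (a, if a = r \<and> b \<le> j then j else b))" for a b
    by (auto simp: \<psi>_def \<phi>e)
  have right: "sep j < snd (\<phi> (a, b))" if "a \<in> {1..k}" "b \<in> {1..l}" "j \<le> b" for a b
    using embedding_col_less[OF emb wide(1,2) that(1,2)] wide(3,4) that(3) by simp
  have "embedding k l P m n M \<psi>"
  proof (rule embeddingI)
    fix a b assume A: "a \<in> {1..k}" "b \<in> {1..l}"
    then show "\<psi> (a, b) \<in> {1..m} \<times> {1..n}"
      using embedding_range[OF emb A] embedding_range[OF emb r j] \<phi>e sep
      by (auto simp: \<psi>_def mem_Times_iff)
  next
    fix a b assume A: "a \<in> {1..k}" "b \<in> {1..l}" "P (a, b)"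
    then have "b < j \<Longrightarrow> a = r" using supp by fastforce
    then show "M (\<psi> (a, b))"
      using embedding_flip_one[OF emb \<phi>e _ A] r j sep A by (auto simp: \<psi>_def)
  next
    fix a1 b1 a2 b2 assume A: "a1 \<in> {1..k}" "b1 \<in> {1..l}" "a2 \<in> {1..k}" "b2 \<in> {1..l}" "a1 < a2"
    then show "fst (\<psi> (a1, b1)) < fst (\<psi> (a2, b2))"
      unfolding \<psi>_row using embedding_row_less[OF emb] j by simp
  next
    fix a1 b1 a2 b2 assume A: "a1 \<in> {1..k}" "b1 \<in> {1..l}" "a2 \<in> {1..k}" "b2 \<in> {1..l}" "b1 < b2"
    have "sep b1 < sep j" if "b1 < j" using strict_mono_onD[OF sep_mono] A that by auto
    moreover have "sep j < snd (\<phi> (a2, b2))" if "j \<le> b2" using right A that by blast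
    ultimately show "snd (\<psi> (a1, b1)) < snd (\<psi> (a2, b2))"
      using strict_mono_onD[OF sep_mono, of b1 b2] embedding_col_less[OF emb A] A
      by (cases b2 j rule: linorder_cases) (auto simp: \<psi>_def)
  qed
  then show ?thesis by blast
qed

lemma critical_entry_after_separators_not_avoids:
  assumes supp: "\<forall>a \<in> {1..k}. \<forall>b \<in> {1..l}. P (a, b) \<longrightarrow> a = r \<or> j \<le> b"
    and r: "r \<in> {1..k}" and j: "j \<in> {1..l}"
    and sep: "\<forall>p \<in> {1..j}. M (i, sep p) \<and> sep p \<in> {1..n}" and sep_mono: "strict_mono_on {1..j} sep"
    and x: "sep j < x" and crit: "critical_entry k l P (r, j) m n M (i, x)"
  shows "\<not> avoids k l P m n M"
proof -
  obtain \<phi> where emb: "embedding k l P m n (flip M (i, x)) \<phi>" and \<phi>e: "\<phi> (r, j) = (i, x)"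
    using crit unfolding critical_entry_def by blast
  have sep_j: "M (i, sep j)" "1 \<le> sep j" using sep j by auto
  have "\<exists>\<psi>. embedding k l P m n M \<psi>"
    \<comment> \<open>Either the columns before \<open>j\<close> leave room to move \<open>(r, j)\<close> onto the separator \<open>sep j\<close>,
      or everything from column \<open>j\<close> on lies right of \<open>sep j\<close>.\<close>
  proof (cases "\<forall>a \<in> {1..k}. \<forall>b \<in> {1..l}. b < j \<longrightarrow> snd (\<phi> (a, b)) < sep j")
    case True
    then show ?thesis using embedding_move_left[OF emb \<phi>e r j sep_j x] by blast
  next
    case False
    then obtain a' b' where "a' \<in> {1..k}" "b' \<in> {1..l}" "b' < j" "sep j \<le> snd (\<phi> (a', b'))"
      by auto
    then show ?thesis using embedding_reroute_left[OF supp emb \<phi>e r j sep sep_mono] by blast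
  qed
  then show ?thesis unfolding avoids_def by blast
qed

lemma hrun_before_later_start:
  assumes h1: "hrun m n M i a b" and h2: "hrun m n M i a' b'" and "a < a'"
  shows "a < a' - 1" "M (i, a' - 1)" "a' - 1 \<in> {1..n}"
proof -
  show M1: "M (i, a' - 1)" using assms unfolding hrun_def by auto
  moreover have "\<not> M (i, a)" using h1 unfolding hrun_def by auto
  ultimately show "a < a' - 1" using \<open>a < a'\<close> by (metis diff_Suc_1 less_Suc_eq less_imp_Suc_add)
  then show "a' - 1 \<in> {1..n}" using h1 h2 unfolding hrun_def by auto
qed

lemma hrun_unique_end:
  assumes "hrun m n M i a b" and "hrun m n M i a b'"
  shows "b = b'"
proof -
  have "\<not> b < b'" if "hrun m n M i a b" "hrun m n M i a b'" for b b'
  proof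
    assume "b < b'"
    then have "\<not> M (i, b + 1)" "b \<noteq> n" using that unfolding hrun_def by auto
    then show False using that(1) unfolding hrun_def by auto
  qed
  then show ?thesis using assms by (meson linorder_neqE_nat)
qed

lemma hruns_separators:
  assumes runs: "\<forall>(a, b) \<in> S. hrun m n M i a b" and card: "j < card S"
  obtains sep a b where "\<forall>p \<in> {1..j}. M (i, sep p) \<and> sep p \<in> {1..n}"
    and "strict_mono_on {1..j} sep" and "(a, b) \<in> S" and "sep j < a"
proof -
  have "finite S" using card by (metis card.infinite not_less0)
  moreover have "inj_on fst S"
  proof (rule inj_onI)
    fix u v assume uv: "u \<in> S" "v \<in> S" "fst u = fst v"
    have "hrun m n M i (fst u) (snd u)" "hrun m n M i (fst v) (snd v)"
      using runs uv(1,2) by (simp_all add: case_prod_beta)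
    then have "snd u = snd v" using uv(3) hrun_unique_end by metis
    then show "u = v" using uv(3) by (simp add: prod_eq_iff)
  qed
  ultimately have len: "length (sorted_list_of_set (fst ` S)) = card S"
    by (simp add: card_image)
  define xs where "xs = sorted_list_of_set (fst ` S)"
  have start: "\<exists>b. (xs ! p, b) \<in> S" if "p < card S" for p
  proof -
    have "xs ! p \<in> fst ` S"
      using nth_mem[of p xs] that len \<open>finite S\<close> by (simp add: xs_def)
    then show ?thesis by force
  qed
  have start_run: "\<exists>b. hrun m n M i (xs ! p) b" if "p < card S" for p
    using start[OF that] runs by blast
  have start_less: "xs ! p < xs ! q" if "p < q" "q < card S" for p q
    using sorted_wrt_nth_less[of "(<)" xs p q] that len by (simp add: xs_def)
  define sep where "sep p = xs ! p - 1" for p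
  have sep_gap: "xs ! (p - 1) < sep p \<and> M (i, sep p) \<and> sep p \<in> {1..n}" if p: "p \<in> {1..j}" for p
  proof -
    have "p - 1 < card S" "p < card S" using p card by auto
    then obtain b b' where "hrun m n M i (xs ! (p - 1)) b" "hrun m n M i (xs ! p) b'"
      using start_run by blast
    then show ?thesis
      using hrun_before_later_start[of m n M i] start_less[of "p - 1" p] p card
      unfolding sep_def by auto
  qed
  have "strict_mono_on {1..j} sep"
  proof (rule strict_mono_onI)
    fix p q assume "p \<in> {1..j}" "q \<in> {1..j}" "p < q"
    then have "p < q - 1 \<or> p = q - 1" "q - 1 < card S" using card by auto
    then have "sep p \<le> xs ! (q - 1)"
      using start_less[of p "q - 1"] unfolding sep_def by auto
    then show "sep p < sep q" using sep_gap \<open>q \<in> {1..j}\<close> by fastforce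
  qed
  moreover obtain b where b: "(xs ! j, b) \<in> S" using start card by blast
  moreover have "sep j < xs ! j"
    using b runs unfolding sep_def hrun_def by fastforce
  ultimately show ?thesis using that sep_gap by blast
qed

lemma card_critical_runs_le:
  assumes supp: "\<forall>a \<in> {1..k}. \<forall>b \<in> {1..l}. P (a, b) \<longrightarrow> a = r \<or> j \<le> b"
    and r: "r \<in> {1..k}" and j: "j \<in> {1..l}" and av: "avoids k l P m n M"
  shows "card (critical_runs k l P (r, j) m n M i) \<le> j"
proof (rule ccontr)
  let ?S = "critical_runs k l P (r, j) m n M i"
  assume "\<not> card ?S \<le> j"
  moreover have "\<forall>(a, b) \<in> ?S. hrun m n M i a b" unfolding critical_runs_def by auto
  ultimately obtain sep a b where sep: "\<forall>p \<in> {1..j}. M (i, sep p) \<and> sep p \<in> {1..n}"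
    and sep_mono: "strict_mono_on {1..j} sep" and ab: "(a, b) \<in> ?S" and "sep j < a"
    using hruns_separators by (metis not_le)
  from ab obtain x where "a \<le> x" and crit: "critical_entry k l P (r, j) m n M (i, x)"
    unfolding critical_runs_def by auto
  with \<open>sep j < a\<close> have "sep j < x" by simp
  with crit av show False
    using critical_entry_after_separators_not_avoids[OF supp r j sep sep_mono] by blast
qed

theorem lemma3p8:
  fixes k l r c :: nat and P :: bmat
  assumes "r \<in> {1..k}" and "c \<in> {1..l}"
    and "\<forall>i \<in> {1..k}. \<forall>j \<in> {1..l}. P (i, j) \<longrightarrow> i = r \<or> c \<le> j"
  shows "\<forall>j \<in> {1..c}. P (r, j) \<longrightarrow> row_bounding k l P (r, j)"
proof (intro ballI impI)
  \<comment> \<open>The bound holds even when \<open>(r, j)\<close> is a 0-entry of \<open>P\<close>.\<close>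
  fix j assume j: "j \<in> {1..c}"
  then have "\<forall>a \<in> {1..k}. \<forall>b \<in> {1..l}. P (a, b) \<longrightarrow> a = r \<or> j \<le> b"
    using assms(3) by fastforce
  moreover have "j \<in> {1..l}" using j assms(2) by auto
  ultimately show "row_bounding k l P (r, j)"
    unfolding row_bounding_def using card_critical_runs_le assms(1) by blast
qed

end
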